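(* Let $\mathbb{S}^{n-1}$ be the unit sphere of $\mathbb{R}^n$ with round metric, Riemannian distance $d$ and volume $\mathrm{dVol}$, and let $c(x,y)=\frac12d^2(x,y)$. Let $\mu_0,\mu_1$ be probability measures on $\mathbb{S}^{n-1}$ and $\phi$ a c-convex potential with $G_{\phi\#}\mu_0=\mu_1$. Assume $\mu_1\ge m\,\mathrm{dVol}$ for some $m>0$ and that $\mu_0$ satisfies $\mathbf{B(n-1)}$. Then there exists $\sigma>0$, depending on $m$ and on $f$ in $\mathbf{B(n-1)}$, such that $d(x,y)\le\pi-\sigma$ for all $x\in\mathbb{S}^{n-1}$ and all $y\in G_\phi(x)$.
   Context: The c-transform of $\psi$ is $\psi^c(x)=\sup_y\{-c(x,y)-\psi(y)\}$; $\phi$ is c-convex if $\phi=\psi^c$ for some $\psi$. $G_\phi(x)=\{y:\phi(x)+\phi^c(y)=-c(x,y)\}$; $G_{\phi\#}\mu_0=\mu_1$ means $\mu_1(B)=\mu_0(G_\phi^{-1}(B))$ for Borel $B$. Condition $\mathbf{B(n-1)}$: there is $f:\mathbb{R}^+\to\mathbb{R}^+$ with $\lim_{\epsilon\to0}f(\epsilon)=0$ such that $\mu_0(B_\epsilon(x))\le f(\epsilon)\epsilon^{(n-1)(1-\frac1{n-1})}$ for all $\epsilon\ge0$, $x\in\mathbb{S}^{n-1}$, where $B_\epsilon(x)$ is a geodesic ball. *)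

theory Defs
  imports "HOL-Analysis.Analysis" "HOL-Probability.Probability"
begin

abbreviation S :: "'a::euclidean_space set" where
  "S \<equiv> sphere 0 1"

definition sdist :: "'a::euclidean_space \<Rightarrow> 'a \<Rightarrow> real" where
  "sdist x y = arccos (x \<bullet> y)"

definition cost :: "'a::euclidean_space \<Rightarrow> 'a \<Rightarrow> real" where
  "cost x y = (sdist x y)^2 / 2"

definition c_transform :: "('a::euclidean_space \<Rightarrow> real) \<Rightarrow> 'a \<Rightarrow> real" where
  "c_transform \<psi> x = (SUP y\<in>S. - cost x y - \<psi> y)"

definition c_convex :: "('a::euclidean_space \<Rightarrow> real) \<Rightarrow> bool" where
  "c_convex \<phi> \<longleftrightarrow> (\<exists>\<psi>. (\<forall>x\<in>S. bdd_above ((\<lambda>y. - cost x y - \<psi> y) ` S))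
                          \<and> (\<forall>x\<in>S. \<phi> x = c_transform \<psi> x))"

definition Gphi :: "('a::euclidean_space \<Rightarrow> real) \<Rightarrow> 'a \<Rightarrow> 'a set" where
  "Gphi \<phi> x = {y\<in>S. \<phi> x + c_transform \<phi> y = - cost x y}"

definition Gphi_preimage :: "('a::euclidean_space \<Rightarrow> real) \<Rightarrow> 'a set \<Rightarrow> 'a set" where
  "Gphi_preimage \<phi> B = {x\<in>S. Gphi \<phi> x \<inter> B \<noteq> {}}"

definition pushes_forward :: "('a::euclidean_space \<Rightarrow> real) \<Rightarrow> 'a measure \<Rightarrow> 'a measure \<Rightarrow> bool" where
  "pushes_forward \<phi> \<mu>0 \<mu>1 \<longleftrightarrow>
     (\<forall>B\<in>sets \<mu>1. Gphi_preimage \<phi> B \<in> sets \<mu>0 \<and>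
                   measure \<mu>1 B = measure \<mu>0 (Gphi_preimage \<phi> B))"

text \<open>Standard surface (Riemannian volume) measure of the unit sphere, via the cone formula
  Vol(A) = n * Lebesgue(cone over A).\<close>
definition sphere_vol :: "'a::euclidean_space set \<Rightarrow> real" where
  "sphere_vol A = real DIM('a) *
     measure lborel {z. z \<noteq> 0 \<and> norm z \<le> 1 \<and> z /\<^sub>R norm z \<in> A}"

definition gball :: "'a::euclidean_space \<Rightarrow> real \<Rightarrow> 'a set" where
  "gball x \<epsilon> = {y\<in>S. sdist x y < \<epsilon>}"

definition prob_on_sphere :: "'a::euclidean_space measure \<Rightarrow> bool" where
  "prob_on_sphere \<mu> \<longleftrightarrow> prob_space \<mu> \<and> sets \<mu> = sets (restrict_space borel S)"

text \<open>Condition B(n-1), with n = DIM('a):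
  mu0(B_eps(x)) <= f(eps) * eps^((n-1)(1 - 1/(n-1))), exponent = n-2.\<close>
definition condB :: "(real \<Rightarrow> real) \<Rightarrow> 'a::euclidean_space measure \<Rightarrow> bool" where
  "condB f \<mu>0 \<longleftrightarrow> (\<forall>\<epsilon>\<ge>0. \<forall>x\<in>S.
      measure \<mu>0 (gball x \<epsilon>) \<le> f \<epsilon> * \<epsilon> ^ (DIM('a) - 2))"

end

theory Submission
  imports Defs
begin

text \<open>Let \<open>y\<^sub>0 \<in> G\<^sub>\<phi>(x\<^sub>0)\<close> with \<open>\<delta> = \<pi> - d(x\<^sub>0,y\<^sub>0)\<close> small. The c-monotonicity of \<open>G\<^sub>\<phi>\<close>
  together with the triangle inequality through the antipodes \<open>-x\<^sub>0\<close>, \<open>-y\<^sub>0\<close> shows that every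
  \<open>x\<close> sent into the hemisphere \<open>H = {y. y\<^sub>0 \<bullet> y \<le> 0}\<close> lies within distance \<open>3\<delta>\<close> of \<open>-y\<^sub>0\<close>.
  Hence \<open>m Vol(H) \<le> \<mu>\<^sub>1(H) \<le> \<mu>\<^sub>0(B\<^sub>3\<^sub>\<delta>(-y\<^sub>0)) \<le> f(3\<delta>)\<close>, which is impossible once \<open>\<delta>\<close> is so
  small that \<open>f\<close> lies below \<open>m\<close> times a lower bound for the volume of a hemisphere.\<close>

lemma abs_inner_sphere_le_1:
  fixes x y :: "'a::euclidean_space"
  assumes "x \<in> S" "y \<in> S"
  shows "\<bar>x \<bullet> y\<bar> \<le> 1"
  using Cauchy_Schwarz_ineq2[of x y] assms by simp

lemma sdist_nonneg_le_pi:
  fixes x y :: "'a::euclidean_space"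
  assumes "x \<in> S" "y \<in> S"
  shows "0 \<le> sdist x y" "sdist x y \<le> pi"
  using abs_inner_sphere_le_1[OF assms]
  by (auto simp: sdist_def intro: arccos_lbound arccos_ubound)

lemma sdist_commute: "sdist x y = sdist y x"
  by (simp add: sdist_def inner_commute)

lemma cost_commute: "cost x y = cost y x"
  by (simp add: cost_def sdist_commute)

lemma sdist_minus_right:
  fixes x y :: "'a::euclidean_space"
  assumes "x \<in> S" "y \<in> S"
  shows "sdist x (-y) = pi - sdist x y"
  using abs_inner_sphere_le_1[OF assms] by (simp add: sdist_def arccos_minus)

lemma cos_sdist_add_le_inner:
  fixes x y z :: "'a::euclidean_space"
  assumes x: "x \<in> S" and y: "y \<in> S" and z: "z \<in> S"
  shows "cos (sdist x y + sdist y z) \<le> x \<bullet> z"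
proof -
  define p q where "p = x \<bullet> y" and "q = y \<bullet> z"
  have p: "\<bar>p\<bar> \<le> 1" and q: "\<bar>q\<bar> \<le> 1"
    using abs_inner_sphere_le_1 x y z by (auto simp: p_def q_def)
  have unit: "x \<bullet> x = 1" "y \<bullet> y = 1" "z \<bullet> z = 1"
    using x y z by (auto simp: dot_square_norm)
  \<comment> \<open>the components of \<open>x\<close> and \<open>z\<close> orthogonal to \<open>y\<close>\<close>
  define u w where "u = x - p *\<^sub>R y" and "w = z - q *\<^sub>R y"
  have uw: "u \<bullet> w = x \<bullet> z - p * q"
    using unit by (simp add: u_def w_def inner_diff_left inner_diff_right p_def q_def
        inner_commute algebra_simps)
  have "u \<bullet> u = 1 - p\<^sup>2" "w \<bullet> w = 1 - q\<^sup>2"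
    using unit by (simp_all add: u_def w_def inner_diff_left inner_diff_right p_def q_def
        inner_commute algebra_simps power2_eq_square)
  then have norms: "norm u = sqrt (1 - p\<^sup>2)" "norm w = sqrt (1 - q\<^sup>2)"
    by (simp_all add: norm_eq_sqrt_inner)
  have "- (norm u * norm w) \<le> u \<bullet> w"
    using Cauchy_Schwarz_ineq2[of u w] by linarith
  with uw norms p q show ?thesis
    by (simp add: sdist_def p_def q_def cos_add sin_arccos)
qed

lemma sdist_triangle:
  fixes x y z :: "'a::euclidean_space"
  assumes x: "x \<in> S" and y: "y \<in> S" and z: "z \<in> S"
  shows "sdist x z \<le> sdist x y + sdist y z"
proof (cases "sdist x y + sdist y z \<le> pi")
  case True
  have "sdist x z \<le> arccos (cos (sdist x y + sdist y z))"
    unfolding sdist_def[of x z]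
    using cos_sdist_add_le_inner[OF assms] abs_inner_sphere_le_1[OF x z]
    by (intro arccos_le_arccos) auto
  also have "\<dots> = sdist x y + sdist y z"
    using True sdist_nonneg_le_pi(1)[OF x y] sdist_nonneg_le_pi(1)[OF y z] by (intro arccos_cos) auto
  finally show ?thesis .
next
  case False
  then show ?thesis using sdist_nonneg_le_pi(2)[OF x z] by linarith
qed

lemma cost_nonneg: "0 \<le> cost x y"
  by (simp add: cost_def)

lemma c_transform_ge:
  assumes "bdd_above ((\<lambda>x. - cost y x - \<psi> x) ` S)" "x \<in> S"
  shows "- cost y x - \<psi> x \<le> c_transform \<psi> y"
  unfolding c_transform_def using assms by (intro cSUP_upper) auto

lemma c_convex_bdd_below:
  fixes \<phi> :: "'a::euclidean_space \<Rightarrow> real"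
  assumes "c_convex \<phi>"
  obtains K where "\<And>x. x \<in> S \<Longrightarrow> - K \<le> \<phi> x"
proof -
  obtain \<psi> where bdd: "\<forall>x\<in>S. bdd_above ((\<lambda>y. - cost x y - \<psi> y) ` S)"
    and eq: "\<forall>x\<in>S. \<phi> x = c_transform \<psi> x"
    using assms unfolding c_convex_def by blast
  define e :: 'a where "e = (SOME e. e \<in> Basis)"
  have e: "e \<in> S"
    using someI_ex[OF ex_in_conv[THEN iffD2, OF nonempty_Basis]] by (simp add: e_def)
  have "- (pi\<^sup>2 / 2 + \<psi> e) \<le> \<phi> x" if x: "x \<in> S" for x
  proof -
    have "cost x e \<le> pi\<^sup>2 / 2"
      using sdist_nonneg_le_pi[OF x e] by (simp add: cost_def power_mono)
    with c_transform_ge[of x \<psi> e] bdd eq x e show ?thesis by force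
  qed
  then show thesis by (rule that)
qed

lemma Gphi_c_monotone:
  fixes \<phi> :: "'a::euclidean_space \<Rightarrow> real"
  assumes cc: "c_convex \<phi>" and x0: "x0 \<in> S" and x: "x \<in> S"
    and g0: "y0 \<in> Gphi \<phi> x0" and g: "y \<in> Gphi \<phi> x"
  shows "cost x y + cost x0 y0 \<le> cost x y0 + cost x0 y"
proof -
  obtain K where K: "\<And>x. x \<in> S \<Longrightarrow> - K \<le> \<phi> x"
    using c_convex_bdd_below[OF cc] by blast
  have bdd: "bdd_above ((\<lambda>x'. - cost z x' - \<phi> x') ` S)" for z :: 'a
  proof (rule bdd_aboveI2)
    fix x' :: 'a
    assume "x' \<in> S"
    with K[of x'] cost_nonneg[of z x'] show "- cost z x' - \<phi> x' \<le> K" by linarith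
  qed
  have "- cost y0 x - \<phi> x \<le> c_transform \<phi> y0" "- cost y x0 - \<phi> x0 \<le> c_transform \<phi> y"
    using c_transform_ge[OF bdd] x x0 by auto
  with g0 g show ?thesis
    by (auto simp: Gphi_def cost_commute[of y0 x] cost_commute[of y x0])
qed

text \<open>Expand the squares in the monotonicity inequality after bounding \<open>d(x,y)\<close> from below
  through \<open>-y\<^sub>0\<close> and \<open>d(x\<^sub>0,y)\<close> from above through \<open>-x\<^sub>0\<close>.\<close>

lemma sdist_antipode_mult_le:
  fixes x0 y0 x y :: "'a::euclidean_space"
  assumes S: "x0 \<in> S" "y0 \<in> S" "x \<in> S" "y \<in> S"
    and mono: "cost x y + cost x0 y0 \<le> cost x y0 + cost x0 y"
  shows "sdist (-y0) x * sdist y y0 \<le> (pi - sdist x0 y0) * (2 * pi - sdist y y0)"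
proof -
  define r t \<delta> d e where "r = sdist (-y0) x" and "t = sdist y y0"
    and "\<delta> = pi - sdist x0 y0" and "d = sdist x y" and "e = sdist x0 y"
  have antipodes: "sdist x y0 = pi - r" "sdist y (-y0) = pi - t"
    "sdist y (-x0) = pi - e" "sdist (-x0) y0 = \<delta>"
    using sdist_minus_right[OF S(3) S(2)] sdist_minus_right[OF S(4) S(2)]
      sdist_minus_right[OF S(4) S(1)] sdist_minus_right[OF S(2) S(1)]
    by (simp_all add: r_def t_def e_def \<delta>_def sdist_commute)
  have "sdist y (-y0) \<le> sdist y x + sdist x (-y0)" "sdist x (-y0) \<le> sdist x y + sdist y (-y0)"
    "sdist y y0 \<le> sdist y (-x0) + sdist (-x0) y0"
    using sdist_triangle[OF S(4) S(3), of "-y0"] sdist_triangle[OF S(3) S(4), of "-y0"]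
      sdist_triangle[OF S(4) _ S(2), of "-x0"] S by auto
  then have tri: "\<bar>pi - t - r\<bar> \<le> d" "e \<le> pi - t + \<delta>"
    using antipodes sdist_commute[of y x] sdist_commute[of x "-y0"]
    by (auto simp: r_def d_def t_def)
  have "0 \<le> d" "0 \<le> e"
    using sdist_nonneg_le_pi S by (auto simp: d_def e_def)
  with tri have "(pi - t - r)\<^sup>2 \<le> d\<^sup>2" "e\<^sup>2 \<le> (pi - t + \<delta>)\<^sup>2"
    by (auto simp: abs_le_square_iff[symmetric] intro: power_mono)
  moreover have "d\<^sup>2 + (pi - \<delta>)\<^sup>2 \<le> (pi - r)\<^sup>2 + e\<^sup>2"
    using mono antipodes by (simp add: cost_def d_def e_def \<delta>_def)
  ultimately have "r * t \<le> \<delta> * (2 * pi - t)"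
    by (simp add: power2_eq_square algebra_simps)
  then show ?thesis by (simp add: r_def t_def \<delta>_def)
qed

lemma sdist_antipode_le_of_Gphi_hemisphere:
  fixes \<phi> :: "'a::euclidean_space \<Rightarrow> real"
  assumes cc: "c_convex \<phi>" and x0: "x0 \<in> S" and x: "x \<in> S"
    and g0: "y0 \<in> Gphi \<phi> x0" and g: "y \<in> Gphi \<phi> x" and hemi: "y0 \<bullet> y \<le> 0"
  shows "sdist (-y0) x \<le> 3 * (pi - sdist x0 y0)"
proof -
  have y0: "y0 \<in> S" and y: "y \<in> S" using g0 g by (auto simp: Gphi_def)
  have "arccos 0 \<le> arccos (y \<bullet> y0)"
    using hemi abs_inner_sphere_le_1[OF y y0] by (intro arccos_le_arccos) (auto simp: inner_commute)
  then have t: "pi / 2 \<le> sdist y y0" "sdist y y0 \<le> pi"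
    using sdist_nonneg_le_pi[OF y y0] by (auto simp: sdist_def)
  have r: "0 \<le> sdist (-y0) x" and \<delta>: "0 \<le> pi - sdist x0 y0"
    using sdist_nonneg_le_pi[of "-y0" x] sdist_nonneg_le_pi[OF x0 y0] x y0 by auto
  have "sdist (-y0) x * (pi / 2) \<le> sdist (-y0) x * sdist y y0"
    using t r by (intro mult_left_mono) auto
  also have "\<dots> \<le> (pi - sdist x0 y0) * (2 * pi - sdist y y0)"
    by (rule sdist_antipode_mult_le[OF x0 y0 x y Gphi_c_monotone[OF cc x0 x g0 g]])
  also have "\<dots> \<le> (pi - sdist x0 y0) * (3 * (pi / 2))"
    using t \<delta> by (intro mult_left_mono) auto
  finally show ?thesis by (simp add: mult.commute)
qed

lemma gball_eq_spherical_cap: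
  fixes z :: "'a::euclidean_space"
  assumes z: "z \<in> S" and \<epsilon>: "0 \<le> \<epsilon>" "\<epsilon> \<le> pi"
  shows "gball z \<epsilon> = S \<inter> {y. cos \<epsilon> < z \<bullet> y}"
proof -
  have "arccos (z \<bullet> y) < arccos (cos \<epsilon>) \<longleftrightarrow> cos \<epsilon> < z \<bullet> y" if "y \<in> S" for y
    using abs_inner_sphere_le_1[OF z that] by (intro arccos_less_mono) auto
  with \<epsilon> show ?thesis by (auto simp: gball_def sdist_def arccos_cos)
qed

lemma sphere_Int_borel_in_sets: "A \<in> sets borel \<Longrightarrow> S \<inter> A \<in> sets (restrict_space borel S)"
  by (auto simp: sets_restrict_space)

text \<open>The cone over the hemisphere \<open>{y. y\<^sub>0 \<bullet> y \<le> 0}\<close> contains the ball of radius \<open>1/4\<close>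
  around \<open>-y\<^sub>0/2\<close>.\<close>

lemma sphere_vol_hemisphere_ge:
  fixes y0 :: "'a::euclidean_space"
  assumes y0: "y0 \<in> S"
  shows "(1/4) ^ DIM('a) * measure lborel (ball (0::'a) 1) \<le> sphere_vol (S \<inter> {y. y0 \<bullet> y \<le> 0})"
proof -
  define C where "C = {z::'a. z \<noteq> 0 \<and> norm z \<le> 1 \<and> z /\<^sub>R norm z \<in> S \<inter> {y. y0 \<bullet> y \<le> 0}}"
  have C: "C = - {0} \<inter> cball 0 1 \<inter> {z. y0 \<bullet> z \<le> 0}"
    by (auto simp: C_def mult_le_0_iff)
  have "C \<in> sets lborel" "C \<subseteq> ball 0 2"
    unfolding C by (auto intro!: sets.Int borel_open borel_closed closed_halfspace_le)
  then have C_fm: "C \<in> fmeasurable lborel"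
    using emeasure_lborel_ball_finite[of "0::'a" 2]
    by (intro fmeasurableI) (auto dest: emeasure_mono[where M = lborel] intro: le_less_trans)
  define c where "c = - (1/2) *\<^sub>R y0"
  have "ball c (1/4) \<subseteq> C"
  proof
    fix z assume "z \<in> ball c (1/4)"
    then have dz: "norm (z - c) < 1/4" by (simp add: dist_norm norm_minus_commute)
    have "norm z \<le> norm c + norm (z - c)" using norm_triangle_sub[of z c] by simp
    moreover have "y0 \<bullet> z = - 1/2 + y0 \<bullet> (z - c)"
      using y0 by (simp add: c_def inner_diff_right inner_add_right dot_square_norm)
    moreover have "\<bar>y0 \<bullet> (z - c)\<bar> \<le> norm (z - c)" using Cauchy_Schwarz_ineq2[of y0 "z - c"] y0 by simp
    ultimately show "z \<in> C" using dz y0 unfolding C by (auto simp: c_def)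
  qed
  then have "(1/4) ^ DIM('a) * measure lborel (ball (0::'a) 1) \<le> measure lborel C"
    using C_fm by (subst content_ball_conv_unit_ball[symmetric]) (auto intro: measure_mono_fmeasurable)
  also have "\<dots> \<le> real DIM('a) * measure lborel C"
    using DIM_positive[where 'a = 'a] by (simp add: mult_le_cancel_right1)
  also have "\<dots> = sphere_vol (S \<inter> {y. y0 \<bullet> y \<le> 0})"
    by (simp only: sphere_vol_def C_def)
  finally show ?thesis .
qed

lemma sdist_Gphi_le_pi_minus:
  fixes \<phi> :: "'a::euclidean_space \<Rightarrow> real" and \<mu>0 \<mu>1 :: "'a measure"
  assumes \<mu>0: "prob_on_sphere \<mu>0" and \<mu>1: "prob_on_sphere \<mu>1"
    and cc: "c_convex \<phi>" and push: "pushes_forward \<phi> \<mu>0 \<mu>1"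
    and lower: "\<forall>A\<in>sets \<mu>1. m * sphere_vol A \<le> measure \<mu>1 A" and "0 \<le> m"
    and B: "condB f \<mu>0" and \<epsilon>: "0 < \<epsilon>" "\<epsilon> \<le> 1" "0 \<le> f \<epsilon>"
    and f_small: "f \<epsilon> < m * ((1/4) ^ DIM('a) * measure lborel (ball (0::'a) 1))"
    and x0: "x0 \<in> S" and g0: "y0 \<in> Gphi \<phi> x0"
  shows "sdist x0 y0 \<le> pi - \<epsilon> / 4"
proof (rule ccontr)
  assume "\<not> ?thesis"
  then have \<delta>: "3 * (pi - sdist x0 y0) < \<epsilon>" using \<epsilon> by simp
  have y0: "y0 \<in> S" using g0 by (simp add: Gphi_def)
  have sets_eq: "sets \<mu>0 = sets (restrict_space borel S)" "sets \<mu>1 = sets (restrict_space borel S)"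
    using \<mu>0 \<mu>1 by (auto simp: prob_on_sphere_def)
  define H where "H = S \<inter> {y. y0 \<bullet> y \<le> 0}"
  have H: "H \<in> sets \<mu>1"
    unfolding H_def sets_eq by (intro sphere_Int_borel_in_sets borel_closed closed_halfspace_le)
  have "Gphi_preimage \<phi> H \<subseteq> gball (-y0) \<epsilon>"
    using sdist_antipode_le_of_Gphi_hemisphere[OF cc x0 _ g0] \<delta>
    by (force simp: Gphi_preimage_def gball_def H_def)
  moreover have "gball (-y0) \<epsilon> \<in> sets \<mu>0"
    using y0 \<epsilon> pi_gt3 unfolding sets_eq
    by (subst gball_eq_spherical_cap) (auto intro: sphere_Int_borel_in_sets borel_open open_halfspace_gt)
  ultimately have "measure \<mu>1 H \<le> measure \<mu>0 (gball (-y0) \<epsilon>)"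
    using push H \<mu>0 unfolding pushes_forward_def prob_on_sphere_def
    by (metis prob_space.finite_measure finite_measure.finite_measure_mono)
  also have "\<dots> \<le> f \<epsilon> * \<epsilon> ^ (DIM('a) - 2)"
    using B \<epsilon> y0 by (simp add: condB_def)
  also have "\<dots> \<le> f \<epsilon>"
    using \<epsilon> by (intro mult_left_le power_le_one) auto
  also have "\<dots> < m * sphere_vol H"
    using f_small sphere_vol_hemisphere_ge[OF y0] \<open>0 \<le> m\<close>
    unfolding H_def by (meson less_le_trans mult_left_mono)
  also have "\<dots> \<le> measure \<mu>1 H"
    using lower H by blast
  finally show False by simp
qed

theorem proposition5p2:
  fixes m :: real and f :: "real \<Rightarrow> real"
  assumes dim: "DIM('a::euclidean_space) \<ge> 2"
    and m_pos: "m > 0"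
    and f_nonneg: "\<forall>\<epsilon>\<ge>0. f \<epsilon> \<ge> 0"
    and f_lim: "(f \<longlongrightarrow> 0) (at_right 0)"
  shows "\<exists>\<sigma>>0. \<forall>(\<mu>0::'a measure) \<mu>1 \<phi>.
           prob_on_sphere \<mu>0 \<and> prob_on_sphere \<mu>1 \<and> c_convex \<phi> \<and>
           pushes_forward \<phi> \<mu>0 \<mu>1 \<and>
           (\<forall>A\<in>sets \<mu>1. measure \<mu>1 A \<ge> m * sphere_vol A) \<and>
           condB f \<mu>0
           \<longrightarrow> (\<forall>x\<in>S. \<forall>y\<in>Gphi \<phi> x. sdist x y \<le> pi - \<sigma>)"
proof -
  define V where "V = (1/4::real) ^ DIM('a) * measure lborel (ball (0::'a) 1)"
  have "0 < m * V"
    using m_pos content_ball_pos[of 1 "0::'a"] by (simp add: V_def)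
  then have "\<forall>\<^sub>F e in at_right 0. f e < m * V"
    using f_lim by (rule order_tendstoD(2)[rotated])
  then obtain b where b: "0 < b" "\<And>e. 0 < e \<Longrightarrow> e < b \<Longrightarrow> f e < m * V"
    unfolding eventually_at_right[OF zero_less_one] by auto
  define \<epsilon> where "\<epsilon> = min b 1 / 2"
  have \<epsilon>: "0 < \<epsilon>" "\<epsilon> \<le> 1" "0 \<le> f \<epsilon>" "f \<epsilon> < m * V"
    using b f_nonneg by (auto simp: \<epsilon>_def)
  have "sdist x y \<le> pi - \<epsilon> / 4"
    if "prob_on_sphere \<mu>0" "prob_on_sphere \<mu>1" "c_convex \<phi>" "pushes_forward \<phi> \<mu>0 \<mu>1"
      "\<forall>A\<in>sets \<mu>1. m * sphere_vol A \<le> measure \<mu>1 A" "condB f \<mu>0" "x \<in> S" "y \<in> Gphi \<phi> x"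
    for \<mu>0 \<mu>1 :: "'a measure" and \<phi> x y
    using sdist_Gphi_le_pi_minus[OF that(1-5) _ that(6) \<epsilon>(1-3) _ that(7,8)] m_pos \<epsilon>(4)
    by (simp add: V_def)
  with \<epsilon>(1) show ?thesis
    by (intro exI[of _ "\<epsilon> / 4"]) auto
qed

end
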